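(* Let $M := \langle X \mid R\rangle$ where $R$ is symmetric, and let $N$ be the additive submonoid of $\mathbb{Z}$ generated by $\{|a|-|b| : (a,b)\in R\}$. (1) If $a,b\in\langle X\rangle$ satisfy $a =_M b$, then $|a|-|b| \in N$. (2) Let $a,b \in\langle X\rangle$ be such that $a =_M b$, $|b|<|a|$, and there is no $c \in \mathsf{Z}_M(a)$ with $|b|<|c|<|a|$. Then there exist $e,f \in \langle X\rangle$ with $(e,f)\in R$ and $|a|-|b| \le |e|-|f|$. (3) For every $n \in N$ there exist $a,b\in\langle X\rangle$ with $a =_M b$ and $n = |a|-|b|$. (4) If $N \neq \{0\}$, then $N = d\mathbb{Z}$, where $d = \gcd(N) = \min(\Delta(M)) = \gcd(\Delta(M))$.
   Context: For a set $X$, $\langle X\rangle$ is the free monoid on $X$ (identity $1$); $M=\langle X\mid R\rangle$ is the monoid presented by generators $X$ and relations $R\subseteq\langle X\rangle\times\langle X\rangle$. $R$ is symmetric if $(a,b)\in R$ implies $(b,a)\in R$. For $a,b\in\langle X\rangle$, $a=_M b$ means equal images in $M$; $|a|$ is word length. $\mathsf{Z}_M(a) := \{b\in\langle X\rangle : b =_M a\}$, $\mathsf{L}_M(a) := \{|b| : b\in\mathsf{Z}_M(a)\}$, $\mathcal{L}(M) := \{\mathsf{L}_M(a): a\in\langle X\rangle\}$. For $L\subseteq\mathbb{N}$, $d\in\mathbb{N}^+$ is a distance of $L$ if $[k,k+d]\cap L=\{k,k+d\}$ for some $k\in L$; $\Delta(L)$ is the set of distances of $L$, and $\Delta(M) :=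 \bigcup_{L\in\mathcal{L}(M)}\Delta(L)$. *)

theory Defs
  imports Main
begin

text \<open>Words over the alphabet (the type 'x) are lists; the empty list is the identity 1.
  A presentation is given by a relation R on words.\<close>

definition pres_step :: "('x list \<times> 'x list) set \<Rightarrow> 'x list \<Rightarrow> 'x list \<Rightarrow> bool" where
  "pres_step R u v \<longleftrightarrow> (\<exists>x y a b. (a, b) \<in> R \<and> u = x @ a @ y \<and> v = x @ b @ y)"

definition eqM :: "('x list \<times> 'x list) set \<Rightarrow> 'x list \<Rightarrow> 'x list \<Rightarrow> bool" where
  "eqM R = equivclp (pres_step R)"

definition ZM :: "('x list \<times> 'x list) set \<Rightarrow> 'x list \<Rightarrow> 'x list set" where
  "ZM R a = {b. eqM R b a}"

definition LM :: "('x list \<times> 'x list) set \<Rightarrow> 'x list \<Rightarrow> nat set" where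
  "LM R a = length ` ZM R a"

definition distances :: "nat set \<Rightarrow> nat set" where
  "distances L = {d. d > 0 \<and> (\<exists>k\<in>L. {k..k+d} \<inter> L = {k, k+d})}"

definition DeltaM :: "('x list \<times> 'x list) set \<Rightarrow> nat set" where
  "DeltaM R = (\<Union>a. distances (LM R a))"

inductive_set lenN :: "('x list \<times> 'x list) set \<Rightarrow> int set" for R where
  zero: "0 \<in> lenN R"
| add: "(a, b) \<in> R \<Longrightarrow> n \<in> lenN R \<Longrightarrow> int (length a) - int (length b) + n \<in> lenN R"

end

theory Submission
  imports Defs
begin

text \<open>Since R is symmetric, N is closed under negation and hence a subgroup d\<int> of \<int>.
  A single elementary move replaces some e by f with (e, f) \<in> R, so the length
  difference of two equal words is a sum of generators of N; conversely every such
  sum is realised by prepending the relations one at a time. For part (2), follow a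
  chain of moves from a to b: at the first move leaving the lengths \<ge> |a|, the new
  word lies in Z(a) with length below |a|, hence at most |b|. For part (4), every
  distance is a difference of lengths in some L(a), hence a positive multiple of d;
  and d itself is a distance, realised by a =_M b with |a| - |b| = d, because no
  length strictly between |b| and |a| can differ from |b| by a multiple of d.\<close>

lemma Gcd_eq_dvd_member:
  fixes a :: "'a :: semiring_Gcd"
  assumes "a \<in> A" "\<And>b. b \<in> A \<Longrightarrow> a dvd b"
  shows "Gcd A = normalize a"
  using assms by (intro Gcd_eqI) (auto intro: dvd_trans)

lemma int_subgroup_eq_Gcd_multiples:
  fixes S :: "int set"
  assumes zero: "0 \<in> S"
    and add: "\<And>x y. x \<in> S \<Longrightarrow> y \<in> S \<Longrightarrow> x + y \<in> S"
    and uminus: "\<And>x. x \<in> S \<Longrightarrow> - x \<in> S"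
  shows "S = {Gcd S * k | k. True}"
proof (cases "S \<subseteq> {0}")
  case True
  then have "S = {0}" using zero by blast
  then show ?thesis by simp
next
  case False
  have mult_nat: "int k * x \<in> S" if "x \<in> S" for k x
    by (induction k) (simp_all add: zero add that distrib_right)
  have mult: "k * x \<in> S" if "x \<in> S" for k x
  proof (cases "k \<ge> 0")
    case True
    then show ?thesis using mult_nat[OF that, of "nat k"] by simp
  next
    case False
    then show ?thesis using uminus[OF mult_nat[OF that, of "nat (- k)"]] by simp
  qed
  obtain x where "x \<in> S" "x \<noteq> 0" using False by blast
  then have "int (nat \<bar>x\<bar>) \<in> S \<and> 0 < nat \<bar>x\<bar>"
    using uminus by (cases "x \<ge> 0") auto
  from ex_has_least_nat[of "\<lambda>k. int k \<in> S \<and> 0 < k", OF this, of id]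
  obtain m where m: "int m \<in> S" "0 < m"
    and m_least: "\<And>k. int k \<in> S \<Longrightarrow> 0 < k \<Longrightarrow> m \<le> k"
    by auto
  have m_dvd: "int m dvd y" if "y \<in> S" for y
  proof -
    have "y mod int m = y + (- (y div int m)) * int m"
      by (simp add: minus_div_mult_eq_mod)
    then have "y mod int m \<in> S" using add[OF that mult[OF m(1)]] by presburger
    moreover have "0 \<le> y mod int m" "y mod int m < int m" using m(2) by simp_all
    ultimately have "y mod int m = 0"
      using m_least[of "nat (y mod int m)"] by fastforce
    then show ?thesis by (simp add: dvd_eq_mod_eq_0)
  qed
  have "Gcd S = int m" using Gcd_eq_dvd_member[OF m(1) m_dvd] by simp
  moreover have "S = {int m * k | k. True}"
  proof
    show "S \<subseteq> {int m * k | k. True}" using m_dvd by (auto simp: dvd_def)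
    show "{int m * k | k. True} \<subseteq> S" using mult[OF m(1)] by (auto simp: mult.commute)
  qed
  ultimately show ?thesis by simp
qed

lemma rtranclp_leaves_predicate:
  assumes "r\<^sup>*\<^sup>* u v" "P u" "\<not> P v"
  shows "\<exists>y z. r\<^sup>*\<^sup>* u y \<and> r y z \<and> P y \<and> \<not> P z"
  using assms
proof (induction rule: rtranclp_induct)
  case base
  then show ?case by simp
next
  case (step y z)
  then show ?case by (cases "P y") (auto intro: rtranclp.rtrancl_into_rtrancl)
qed

lemma distancesD:
  assumes "d \<in> distances L"
  shows "0 < d" "\<exists>k. k \<in> L \<and> k + d \<in> L"
  using assms unfolding distances_def by auto

lemma distancesI:
  assumes "k \<in> L" "k + d \<in> L" "0 < d"
    and dvd_diff: "\<And>j. j \<in> L \<Longrightarrow> k \<le> j \<Longrightarrow> d dvd j - k"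
  shows "d \<in> distances L"
proof -
  have "j = k \<or> j = k + d" if "j \<in> L" "k \<le> j" "j \<le> k + d" for j
    using dvd_diff[OF that(1,2)] dvd_imp_le[of d "j - k"] that(2,3) by fastforce
  then have "{k..k + d} \<inter> L = {k, k + d}" using assms(1,2) by fastforce
  then show ?thesis using assms(1,3) unfolding distances_def by blast
qed

lemma eqM_refl: "eqM R a a"
  by (simp add: eqM_def)

lemma eqM_sym: "eqM R a b \<Longrightarrow> eqM R b a"
  by (simp add: eqM_def equivclp_sym)

lemma eqM_trans: "eqM R a b \<Longrightarrow> eqM R b c \<Longrightarrow> eqM R a c"
  unfolding eqM_def by (rule equivclp_trans)

lemma pres_step_imp_eqM: "pres_step R a b \<Longrightarrow> eqM R a b"
  by (simp add: eqM_def r_into_equivclp)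

lemma pres_step_append_left: "pres_step R a b \<Longrightarrow> pres_step R (c @ a) (c @ b)"
  unfolding pres_step_def by (metis append.assoc)

lemma eqM_append_left: "eqM R a b \<Longrightarrow> eqM R (c @ a) (c @ b)"
  unfolding eqM_def equivclp_def
proof (induction rule: rtranclp_induct)
  case base
  then show ?case by simp
next
  case (step y z)
  then have "symclp (pres_step R) (c @ y) (c @ z)"
    by (auto simp: symclp_def pres_step_append_left)
  with step.IH show ?case by (meson rtranclp.rtrancl_into_rtrancl)
qed

lemma mem_LM_iff: "n \<in> LM R a \<longleftrightarrow> (\<exists>c. eqM R c a \<and> length c = n)"
  unfolding LM_def ZM_def by auto

lemma symclp_pres_step_eq:
  assumes "sym R"
  shows "symclp (pres_step R) = pres_step R"
proof -
  have "pres_step R b a" if "pres_step R a b" for a b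
    using that assms unfolding pres_step_def sym_def by blast
  then show ?thesis by (fastforce simp: symclp_def fun_eq_iff)
qed

lemma eqM_eq_rtranclp: "sym R \<Longrightarrow> eqM R = (pres_step R)\<^sup>*\<^sup>*"
  by (simp add: eqM_def equivclp_def symclp_pres_step_eq)

lemma pres_step_length_diff:
  assumes "pres_step R a b"
  obtains e f where "(e, f) \<in> R" "int (length a) - int (length b) = int (length e) - int (length f)"
  using assms unfolding pres_step_def by force

lemma lenN_generator: "(a, b) \<in> R \<Longrightarrow> int (length a) - int (length b) \<in> lenN R"
  using lenN.add[OF _ lenN.zero] by simp

lemma lenN_add: "m \<in> lenN R \<Longrightarrow> n \<in> lenN R \<Longrightarrow> m + n \<in> lenN R"
proof (induction m rule: lenN.induct)
  case zero
  then show ?case by simp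
next
  case (add a b m)
  then show ?case using lenN.add[of a b R "m + n"] by (simp add: add.assoc)
qed

lemma lenN_uminus:
  assumes "sym R" "n \<in> lenN R"
  shows "- n \<in> lenN R"
  using assms(2)
proof (induction n rule: lenN.induct)
  case zero
  then show ?case by (simp add: lenN.zero)
next
  case (add a b n)
  have "(b, a) \<in> R" using add.hyps(1) assms(1) by (meson symD)
  from lenN_add[OF add.IH lenN_generator[OF this]] show ?case by simp
qed

lemma lenN_eq_Gcd_multiples: "sym R \<Longrightarrow> lenN R = {Gcd (lenN R) * k | k. True}"
  by (rule int_subgroup_eq_Gcd_multiples) (auto intro: lenN.zero lenN_add lenN_uminus)

lemma eqM_length_diff_mem_lenN:
  assumes "sym R" "eqM R a b"
  shows "int (length a) - int (length b) \<in> lenN R"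
  using assms(2) unfolding eqM_eq_rtranclp[OF assms(1)]
proof (induction rule: rtranclp_induct)
  case base
  then show ?case by (simp add: lenN.zero)
next
  case (step y z)
  obtain e f where "(e, f) \<in> R" "int (length y) - int (length z) = int (length e) - int (length f)"
    using pres_step_length_diff[OF step.hyps(2)] .
  then have "int (length y) - int (length z) \<in> lenN R" using lenN_generator by simp
  from lenN_add[OF step.IH this] show ?case by simp
qed

lemma eqM_length_gap_le_relation_diff:
  assumes "sym R" "eqM R a b" "length b < length a"
    and no_between: "\<not> (\<exists>c\<in>ZM R a. length b < length c \<and> length c < length a)"
  shows "\<exists>e f. (e, f) \<in> R \<and> int (length a) - int (length b) \<le> int (length e) - int (length f)"
proof -
  have "(pres_step R)\<^sup>*\<^sup>* a b" using assms(2) by (simp add: eqM_eq_rtranclp[OF assms(1)])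
  then obtain y z where y: "(pres_step R)\<^sup>*\<^sup>* a y" "length a \<le> length y"
    and z: "pres_step R y z" "length z < length a"
    using rtranclp_leaves_predicate[of "pres_step R" a b "\<lambda>w. length a \<le> length w"] assms(3) by auto
  have "eqM R a z"
    using rtranclp.rtrancl_into_rtrancl[OF y(1) z(1)] by (simp add: eqM_eq_rtranclp[OF assms(1)])
  then have "z \<in> ZM R a" by (simp add: ZM_def eqM_sym)
  then have "length z \<le> length b" using no_between z(2) by fastforce
  obtain e f where "(e, f) \<in> R" "int (length y) - int (length z) = int (length e) - int (length f)"
    using pres_step_length_diff[OF z(1)] .
  then show ?thesis using y(2) \<open>length z \<le> length b\<close> by (intro exI[of _ e] exI[of _ f]) auto
qed

lemma lenN_realised_by_eqM:
  "n \<in> lenN R \<Longrightarrow> \<exists>a b. eqM R a b \<and> n = int (length a) - int (length b)"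
proof (induction n rule: lenN.induct)
  case zero
  then show ?case using eqM_refl by fastforce
next
  case (add e f n)
  then obtain a b where ab: "eqM R a b" "n = int (length a) - int (length b)" by blast
  have "pres_step R (e @ a) (f @ a)"
    using add.hyps(1) unfolding pres_step_def by (metis append_Nil)
  then have "eqM R (e @ a) (f @ b)"
    using eqM_append_left[OF ab(1)] by (blast intro: eqM_trans pres_step_imp_eqM)
  then show ?case using ab(2) by (intro exI[of _ "e @ a"] exI[of _ "f @ b"]) auto
qed

lemma DeltaM_mem_lenN:
  assumes "sym R" "e \<in> DeltaM R"
  shows "int e \<in> lenN R"
proof -
  obtain a where "e \<in> distances (LM R a)" using assms(2) unfolding DeltaM_def by blast
  then obtain k where "k \<in> LM R a" "k + e \<in> LM R a" using distancesD(2) by blast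
  then obtain c c' where c: "eqM R c a" "length c = k" and c': "eqM R c' a" "length c' = k + e"
    unfolding mem_LM_iff by blast
  have "eqM R c' c" using c(1) c'(1) by (meson eqM_sym eqM_trans)
  from eqM_length_diff_mem_lenN[OF assms(1) this] show ?thesis using c(2) c'(2) by simp
qed

lemma Gcd_lenN_mem_DeltaM:
  assumes "sym R" "lenN R \<noteq> {0}"
  shows "nat (Gcd (lenN R)) \<in> DeltaM R"
proof -
  let ?d = "Gcd (lenN R)"
  have N: "lenN R = {?d * k | k. True}" by (rule lenN_eq_Gcd_multiples[OF assms(1)])
  have "?d \<noteq> 0" using assms(2) lenN.zero by auto
  then have d_pos: "0 < ?d" using Gcd_int_greater_eq_0[of "lenN R"] by linarith
  have "?d \<in> lenN R" using N by (auto intro: exI[of _ 1])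
  then obtain a b where ab: "eqM R a b" "?d = int (length a) - int (length b)"
    using lenN_realised_by_eqM by blast
  have "nat ?d \<in> distances (LM R a)"
  proof (rule distancesI)
    show "length b \<in> LM R a" using ab(1) eqM_sym mem_LM_iff by blast
    show "length b + nat ?d \<in> LM R a" using ab d_pos eqM_refl mem_LM_iff by fastforce
    show "0 < nat ?d" using d_pos by simp
    fix j assume "j \<in> LM R a" "length b \<le> j"
    then obtain c where c: "eqM R c b" "length c = j" "length b \<le> j"
      using ab(1) eqM_sym eqM_trans mem_LM_iff by meson
    then have "int (j - length b) \<in> lenN R"
      using eqM_length_diff_mem_lenN[OF assms(1) c(1)] by simp
    then have "?d dvd int (j - length b)" using Gcd_dvd by blast
    then show "nat ?d dvd j - length b" using d_pos by (simp add: nat_dvd_iff)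
  qed
  then show ?thesis unfolding DeltaM_def by blast
qed

theorem lemma4p2:
  fixes R :: "('x list \<times> 'x list) set"
  assumes "sym R"
  shows "(\<forall>a b. eqM R a b \<longrightarrow> int (length a) - int (length b) \<in> lenN R)
    \<and> (\<forall>a b. eqM R a b \<and> length b < length a
          \<and> \<not> (\<exists>c\<in>ZM R a. length b < length c \<and> length c < length a)
        \<longrightarrow> (\<exists>e f. (e, f) \<in> R \<and>
               int (length a) - int (length b) \<le> int (length e) - int (length f)))
    \<and> (\<forall>n\<in>lenN R. \<exists>a b. eqM R a b \<and> n = int (length a) - int (length b))
    \<and> (lenN R \<noteq> {0} \<longrightarrow>
        (let d = Gcd (lenN R) in
           lenN R = {d * k | k. True}
           \<and> nat d \<in> DeltaM R \<and> (\<forall>e\<in>DeltaM R. nat d \<le> e)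
           \<and> d = int (Gcd (DeltaM R))))"
proof -
  have "nat (Gcd (lenN R)) \<le> e" "nat (Gcd (lenN R)) dvd e" if "e \<in> DeltaM R" for e
  proof -
    have "Gcd (lenN R) dvd int e" using DeltaM_mem_lenN[OF assms that] Gcd_dvd by blast
    then show "nat (Gcd (lenN R)) dvd e" by (simp add: nat_dvd_iff)
    moreover have "0 < e" using that distancesD(1) unfolding DeltaM_def by blast
    ultimately show "nat (Gcd (lenN R)) \<le> e" by (rule dvd_imp_le)
  qed
  then show ?thesis
    using eqM_length_diff_mem_lenN[OF assms] eqM_length_gap_le_relation_diff[OF assms]
      lenN_realised_by_eqM lenN_eq_Gcd_multiples[OF assms] Gcd_lenN_mem_DeltaM[OF assms]
      Gcd_eq_dvd_member[of "nat (Gcd (lenN R))" "DeltaM R"]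
    by (auto simp: Let_def)
qed

end
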